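(* Let $\mathbb X,\mathbb Y_1,\mathbb Y_2,\mathbb X^\sharp,\mathbb Y_1^\sharp,\mathbb Y_2^\sharp$ be sets with couplings $c:\mathbb X\times\mathbb X^\sharp\to\overline{\mathbb R}$, $d_1:\mathbb Y_1\times\mathbb Y_1^\sharp\to\overline{\mathbb R}$, $d_2:\mathbb Y_2\times\mathbb Y_2^\sharp\to\overline{\mathbb R}$, and let $\phi:\mathbb Y_1\times\mathbb X\times\mathbb Y_2\to\overline{\mathbb R}$. Define $\phi^\sharp:\mathbb Y_1^\sharp\times\mathbb X^\sharp\times\mathbb Y_2^\sharp\to\overline{\mathbb R}$ by $$\phi^\sharp(y_1^\sharp,x^\sharp,y_2^\sharp)=\sup_{(y_1,x,y_2)\in\mathbb Y_1\times\mathbb X\times\mathbb Y_2}\Big(c(x,x^\sharp)\mathbin{\underset{\cdot}{+}} d_1(y_1,y_1^\sharp)\mathbin{\underset{\cdot}{+}} d_2(y_2,y_2^\sharp)\mathbin{\underset{\cdot}{+}}\big(-\phi(y_1,x,y_2)\big)\Big).$$ Then for all $f:\mathbb X\to\overline{\mathbb R}$, $g_1:\mathbb Y_1\to\overline{\mathbb R}$, $g_2:\mathbb Y_2\to\overline{\mathbb R}$: if $f(x)\ge (g_1\square^{\phi} g_2)(x)$ for all $x\in\mathbb X$, then $f^{c}(x^\sharp)\le\big(g_1^{-d_1}\square^{\phi^\sharp}g_2^{-d_2}\big)(x^\sharp)$ for all $x^\sharp\in\mathbb X^\sharp$.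
   Context: $\overline{\mathbb R}=[-\infty,+\infty]$. The Moreau lower addition $\mathbin{\underset{\cdot}{+}}$ is usual addition extended by $(+\infty)\mathbin{\underset{\cdot}{+}}(-\infty)=(-\infty)\mathbin{\underset{\cdot}{+}}(+\infty)=-\infty$; the Moreau upper addition $\mathbin{\overset{\cdot}{+}}$ is usual addition extended by $(+\infty)\mathbin{\overset{\cdot}{+}}(-\infty)=(-\infty)\mathbin{\overset{\cdot}{+}}(+\infty)=+\infty$. Generalized inf-convolution: for sets $A,B,C$, a function $\psi:A\times B\times C\to\overline{\mathbb R}$ and $h_1:A\to\overline{\mathbb R}$, $h_2:C\to\overline{\mathbb R}$, $(h_1\square^{\psi}h_2)(b)=\inf_{a\in A,\,z\in C}\big(h_1(a)\mathbin{\overset{\cdot}{+}}\psi(a,b,z)\mathbin{\overset{\cdot}{+}} h_2(z)\big)$. Conjugates: $f^{c}(x^\sharp)=\sup_{x}\big(c(x,x^\sharp)\mathbin{\underset{\cdot}{+}}(-f(x))\big)$ and $g_i^{-d_i}(y_i^\sharp)=\sup_{y_i}\big((-d_i(y_i,y_i^\sharp))\mathbin{\underset{\cdot}{+}}(-g_i(y_i))\big)$. *)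

theory Defs
  imports "HOL-Library.Extended_Real"
begin

definition lower_add :: "ereal \<Rightarrow> ereal \<Rightarrow> ereal" (infixl "+\<^sub>l" 65) where
  "a +\<^sub>l b = (if (a = \<infinity> \<and> b = -\<infinity>) \<or> (a = -\<infinity> \<and> b = \<infinity>) then -\<infinity> else a + b)"

definition upper_add :: "ereal \<Rightarrow> ereal \<Rightarrow> ereal" (infixl "+\<^sub>u" 65) where
  "a +\<^sub>u b = (if (a = \<infinity> \<and> b = -\<infinity>) \<or> (a = -\<infinity> \<and> b = \<infinity>) then \<infinity> else a + b)"

definition inf_conv ::
  "('a \<Rightarrow> ereal) \<Rightarrow> ('a \<Rightarrow> 'b \<Rightarrow> 'c \<Rightarrow> ereal) \<Rightarrow> ('c \<Rightarrow> ereal) \<Rightarrow> 'b \<Rightarrow> ereal" where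
  "inf_conv h1 \<psi> h2 b = (INF (a, z) \<in> UNIV. h1 a +\<^sub>u \<psi> a b z +\<^sub>u h2 z)"

definition conj_c :: "('x \<Rightarrow> 'xs \<Rightarrow> ereal) \<Rightarrow> ('x \<Rightarrow> ereal) \<Rightarrow> 'xs \<Rightarrow> ereal" where
  "conj_c c f xs = (SUP x \<in> UNIV. c x xs +\<^sub>l (- f x))"

definition conj_neg :: "('y \<Rightarrow> 'ys \<Rightarrow> ereal) \<Rightarrow> ('y \<Rightarrow> ereal) \<Rightarrow> 'ys \<Rightarrow> ereal" where
  "conj_neg d g ys = (SUP y \<in> UNIV. (- d y ys) +\<^sub>l (- g y))"

definition phi_sharp ::
  "('x \<Rightarrow> 'xs \<Rightarrow> ereal) \<Rightarrow> ('y1 \<Rightarrow> 'y1s \<Rightarrow> ereal) \<Rightarrow> ('y2 \<Rightarrow> 'y2s \<Rightarrow> ereal)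
   \<Rightarrow> ('y1 \<Rightarrow> 'x \<Rightarrow> 'y2 \<Rightarrow> ereal) \<Rightarrow> 'y1s \<Rightarrow> 'xs \<Rightarrow> 'y2s \<Rightarrow> ereal" where
  "phi_sharp c d1 d2 \<phi> y1s xs y2s =
     (SUP (y1, x, y2) \<in> UNIV. c x xs +\<^sub>l d1 y1 y1s +\<^sub>l d2 y2 y2s +\<^sub>l (- \<phi> y1 x y2))"

end

theory Submission
  imports Defs
begin

text \<open>
  For all \<open>x, y1, y2\<close>, adding and subtracting \<open>d1(y1,y1#)\<close> and
  \<open>d2(y2,y2#)\<close> gives
    \<open>c(x,x#) - g1(y1) - \<phi>(y1,x,y2) - g2(y2) \<le> (-d1 - g1(y1)) + (c + d1 + d2 - \<phi>) + (-d2 - g2(y2))\<close>,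
  which survives infinite terms because the left side is a lower and the right side an upper
  sum. The three brackets are bounded by \<open>g1^(-d1)(y1#)\<close>, \<open>\<phi>#(y1#,x#,y2#)\<close> and \<open>g2^(-d2)(y2#)\<close>.
  The supremum over \<open>x, y1, y2\<close> on the left is the \<open>c\<close>-conjugate of \<open>g1 \<box>^\<phi> g2\<close>, which
  dominates that of \<open>f\<close> since conjugation is antitone; the infimum over \<open>y1#, y2#\<close> on the
  right is the inf-convolution of the conjugates.
\<close>

lemma lower_add_assoc: "a +\<^sub>l b +\<^sub>l c = a +\<^sub>l (b +\<^sub>l c)"
  by (cases a; cases b; cases c) (auto simp: lower_add_def)

lemma uminus_upper_add: "- (a +\<^sub>u b) = - a +\<^sub>l - b"
  by (cases a; cases b) (auto simp: lower_add_def upper_add_def)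

lemma lower_add_mono: "a \<le> a' \<Longrightarrow> b \<le> b' \<Longrightarrow> a +\<^sub>l b \<le> a' +\<^sub>l b'"
  by (cases a; cases b; cases a'; cases b') (auto simp: lower_add_def)

lemma upper_add_mono: "a \<le> a' \<Longrightarrow> b \<le> b' \<Longrightarrow> a +\<^sub>u b \<le> a' +\<^sub>u b'"
  by (cases a; cases b; cases a'; cases b') (auto simp: upper_add_def)

lemma lower_add_SUP: "c +\<^sub>l (SUP i\<in>I. u i) = (SUP i\<in>I. c +\<^sub>l u i)"
proof (cases c)
  case (real r)
  then have "c +\<^sub>l a = c + a" for a
    by (simp add: lower_add_def)
  moreover have "c + (SUP i\<in>I. u i) = (SUP i\<in>I. c + u i)"
    using real by (cases "I = {}") (simp_all add: SUP_ereal_add_right bot_ereal_def)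
  ultimately show ?thesis
    by simp
next
  case PInf
  show ?thesis
  proof (cases "\<exists>i\<in>I. u i \<noteq> -\<infinity>")
    case True
    then obtain i where "i \<in> I" "u i \<noteq> -\<infinity>"
      by blast
    have "(SUP i\<in>I. u i) \<noteq> -\<infinity>"
      using SUP_upper[OF \<open>i \<in> I\<close>, of u] \<open>u i \<noteq> -\<infinity>\<close> by auto
    moreover have "\<infinity> \<le> (SUP i\<in>I. c +\<^sub>l u i)"
      using \<open>i \<in> I\<close> \<open>u i \<noteq> -\<infinity>\<close> PInf by (intro SUP_upper2) (auto simp: lower_add_def)
    ultimately show ?thesis
      using PInf by (simp add: lower_add_def)
  next
    case False
    then have "(SUP i\<in>I. u i) = -\<infinity>" and "(SUP i\<in>I. c +\<^sub>l u i) = -\<infinity>"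
      using PInf by (simp_all add: SUP_bot_conv(1)[where 'a = ereal, unfolded bot_ereal_def] lower_add_def)
    then show ?thesis
      using PInf by (simp add: lower_add_def)
  qed
next
  case MInf
  then have "c +\<^sub>l a = -\<infinity>" for a
    by (cases a) (simp_all add: lower_add_def)
  then show ?thesis
    by (simp flip: bot_ereal_def)
qed

lemma lower_add_le_upper_add_regrouped:
  "c +\<^sub>l a +\<^sub>l p +\<^sub>l e \<le> (- d1 +\<^sub>l a) +\<^sub>u (c +\<^sub>l d1 +\<^sub>l d2 +\<^sub>l p) +\<^sub>u (- d2 +\<^sub>l e)"
  by (cases c; cases a; cases p; cases e; cases d1; cases d2) (auto simp: lower_add_def upper_add_def)

lemma conj_c_antimono:
  assumes "\<And>x. h x \<le> f x"
  shows "conj_c c f xs \<le> conj_c c h xs"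
  unfolding conj_c_def
  using assms by (intro SUP_mono' lower_add_mono) simp_all

lemma lower_add_uminus_inf_conv_term_le:
  "c x xs +\<^sub>l - (g1 y1 +\<^sub>u \<phi> y1 x y2 +\<^sub>u g2 y2)
     \<le> conj_neg d1 g1 y1s +\<^sub>u phi_sharp c d1 d2 \<phi> y1s xs y2s +\<^sub>u conj_neg d2 g2 y2s"
proof -
  have "c x xs +\<^sub>l - (g1 y1 +\<^sub>u \<phi> y1 x y2 +\<^sub>u g2 y2)
      = c x xs +\<^sub>l - g1 y1 +\<^sub>l - \<phi> y1 x y2 +\<^sub>l - g2 y2"
    by (simp add: uminus_upper_add lower_add_assoc)
  also have "\<dots> \<le> (- d1 y1 y1s +\<^sub>l - g1 y1) +\<^sub>u (c x xs +\<^sub>l d1 y1 y1s +\<^sub>l d2 y2 y2s +\<^sub>l - \<phi> y1 x y2)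
      +\<^sub>u (- d2 y2 y2s +\<^sub>l - g2 y2)"
    by (rule lower_add_le_upper_add_regrouped)
  also have "\<dots> \<le> conj_neg d1 g1 y1s +\<^sub>u phi_sharp c d1 d2 \<phi> y1s xs y2s +\<^sub>u conj_neg d2 g2 y2s"
    unfolding conj_neg_def phi_sharp_def
    by (intro upper_add_mono SUP_upper2[where i = "(y1, x, y2)"] SUP_upper) simp_all
  finally show ?thesis .
qed

lemma conj_c_inf_conv_le:
  "conj_c c (inf_conv g1 \<phi> g2) xs
     \<le> inf_conv (conj_neg d1 g1) (phi_sharp c d1 d2 \<phi>) (conj_neg d2 g2) xs"
  unfolding inf_conv_def
proof (intro INF_greatest, clarify)
  fix y1s y2s
  have "c x xs +\<^sub>l - (INF (y1, y2)\<in>UNIV. g1 y1 +\<^sub>u \<phi> y1 x y2 +\<^sub>u g2 y2)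
      \<le> conj_neg d1 g1 y1s +\<^sub>u phi_sharp c d1 d2 \<phi> y1s xs y2s +\<^sub>u conj_neg d2 g2 y2s" for x
    unfolding ereal_SUP_uminus_eq[symmetric] lower_add_SUP
    by (intro SUP_least) (auto intro: lower_add_uminus_inf_conv_term_le)
  then show "conj_c c (\<lambda>x. INF (y1, y2)\<in>UNIV. g1 y1 +\<^sub>u \<phi> y1 x y2 +\<^sub>u g2 y2) xs
      \<le> conj_neg d1 g1 y1s +\<^sub>u phi_sharp c d1 d2 \<phi> y1s xs y2s +\<^sub>u conj_neg d2 g2 y2s"
    unfolding conj_c_def by (intro SUP_least)
qed

theorem proposition1:
  fixes c :: "'x \<Rightarrow> 'xs \<Rightarrow> ereal"
    and d1 :: "'y1 \<Rightarrow> 'y1s \<Rightarrow> ereal"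
    and d2 :: "'y2 \<Rightarrow> 'y2s \<Rightarrow> ereal"
    and \<phi> :: "'y1 \<Rightarrow> 'x \<Rightarrow> 'y2 \<Rightarrow> ereal"
    and f :: "'x \<Rightarrow> ereal" and g1 :: "'y1 \<Rightarrow> ereal" and g2 :: "'y2 \<Rightarrow> ereal"
  assumes "\<forall>x. f x \<ge> inf_conv g1 \<phi> g2 x"
  shows "\<forall>xs. conj_c c f xs
           \<le> inf_conv (conj_neg d1 g1) (phi_sharp c d1 d2 \<phi>) (conj_neg d2 g2) xs"
proof
  fix xs
  have "conj_c c f xs \<le> conj_c c (inf_conv g1 \<phi> g2) xs"
    using assms by (intro conj_c_antimono) simp
  also have "\<dots> \<le> inf_conv (conj_neg d1 g1) (phi_sharp c d1 d2 \<phi>) (conj_neg d2 g2) xs"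
    by (rule conj_c_inf_conv_le)
  finally show "conj_c c f xs
      \<le> inf_conv (conj_neg d1 g1) (phi_sharp c d1 d2 \<phi>) (conj_neg d2 g2) xs" .
qed

end
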